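(* Let $n\ge 2$ be an integer and let $c,\Delta x,\alpha,q_1,q_2,r,\sigma_m,\sigma_d>0$. Define $$\Pi_1=\frac{\alpha^2}{\Delta x^2},\quad \Pi_2=\frac{c^2q_1^2}{q_2^2\Delta x^2},\quad \Pi_3=\frac{\Delta x^2 r}{c^2q_1},\quad \Pi_4=\frac{\Delta x^2\sigma_d}{c^2\sigma_m}.$$ Let $\mathbb{D}^2$ be the $n\times n$ circulant matrix with first row $(-2,1,0,\ldots,0,1)$, $A=\begin{bmatrix}0&I\\ \mathbb{D}^2&0\end{bmatrix}$, $B=\begin{bmatrix}0\\ I\end{bmatrix}$, $C=\begin{bmatrix}\Pi_4 I&0\end{bmatrix}$. Let $K=\begin{bmatrix}K_1&K_2\end{bmatrix}$ ($K_1,K_2\in\mathbb{R}^{n\times n}$) be the optimal LQR gain for the problem of minimizing $\int_0^\infty \boldsymbol{\Phi}^T\begin{bmatrix}I-\Pi_1\mathbb{D}^2&0\\0&\Pi_2I\end{bmatrix}\boldsymbol{\Phi}+\Pi_3^{-2}\boldsymbol{\omega}^T\boldsymbol{\omega}\,d\tau$ subject to $\frac{d}{d\tau}\boldsymbol{\Phi}=A\boldsymbol{\Phi}+B\boldsymbol{\omega}$, and let $L=\begin{bmatrix}L_1\\ L_2\end{bmatrix}$ ($L_1,L_2\in\mathbb{R}^{n\times n}$) be the optimal Kalman filter gain for the system $\frac{d}{d\tau}\boldsymbol{\Psi}=A\boldsymbol{\Psi}+B\boldsymbol{\rho}$, $\boldsymbol{\gamma}=C\boldsymbol{\Psi}+\boldsymbol{\eta}$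 with cost $\int_0^\infty\boldsymbol{\eta}^T(I-\Pi_1\mathbb{D}^2)\boldsymbol{\eta}+\boldsymbol{\rho}^T\boldsymbol{\rho}\,d\tau$. The corresponding (nondimensional, discretized) LQG controller is $\frac{d}{d\tau}\tilde{\boldsymbol{\Phi}}=(A-LC)\tilde{\boldsymbol{\Phi}}+B\boldsymbol{\omega}+L\boldsymbol{\gamma}$, $\boldsymbol{\omega}=-K\tilde{\boldsymbol{\Phi}}$. If $q_1=\sigma_m$, $r=\sigma_d$, and $\Pi_1=\frac{2}{\Pi_4}$, then this LQG controller is completely decentralized, i.e. $K_1,K_2,L_1,L_2$ are all diagonal matrices.
   Context: This is the spatial discretization (with $n$ equispaced points, spacing $\Delta x$, periodic boundary conditions) and nondimensionalization of the LQG problem for the wave equation $\partial_t^2p=c^2\partial_x^2p+u+d$, $y=p+m$ on a circle, with LQR cost weights $1/q_1^2$ (on $p$ in a Sobolev-type norm with parameter $\alpha$), $1/q_2^2$ (on $\partial_tp$), $1/r^2$ (on $u$), and Kalman filter cost weights $1/\sigma_m^2$ (on $m$, Sobolev-type norm with parameter $\alpha$), $1/\sigma_d^2$ (on $d$). The optimal LQR gain for cost $\int\boldsymbol{\Phi}^TQ\boldsymbol{\Phi}+\boldsymbol{\omega}^TR\boldsymbol{\omega}$ is $K=R^{-1}B^TP$ with $P$ the symmetric positive definite stabilizing solution of $PA+A^TP-PBR^{-1}B^TP+Q=0$; the optimal Kalman gain for cost $\int\boldsymbol{\eta}^TW\boldsymbol{\eta}+\boldsymbol{\rho}^T\boldsymbol{\rho}$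 is $L=SC^TW$ with $S$ the symmetric positive definite stabilizing solution of $AS+SA^T+BB^T-SC^TWCS=0$. Gains are called completely decentralized when their $n\times n$ blocks are diagonal (so computation at spatial location $i$ needs only data at location $i$). *)

theory Defs
  imports Complex_Main "Jordan_Normal_Form.Matrix" "Jordan_Normal_Form.Char_Poly"
begin

text \<open>Periodic second-difference matrix: n x n circulant with first row
  (-2, 1, 0, ..., 0, 1); entries written additively so that it is the
  periodic discrete Laplacian x(i+1) - 2 x(i) + x(i-1).\<close>
definition D2 :: "nat \<Rightarrow> real mat" where
  "D2 n = mat n n (\<lambda>(i,j). (if i = j then -2 else 0)
            + (if j = (i + 1) mod n then 1 else 0)
            + (if i = (j + 1) mod n then 1 else 0))"

definition sys_A :: "nat \<Rightarrow> real mat" where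
  "sys_A n = four_block_mat (0\<^sub>m n n) (1\<^sub>m n) (D2 n) (0\<^sub>m n n)"

definition sys_B :: "nat \<Rightarrow> real mat" where
  "sys_B n = four_block_mat (0\<^sub>m n n) (0\<^sub>m n 0) (1\<^sub>m n) (0\<^sub>m n 0)"

definition sys_C :: "nat \<Rightarrow> real \<Rightarrow> real mat" where
  "sys_C n p4 = four_block_mat (p4 \<cdot>\<^sub>m 1\<^sub>m n) (0\<^sub>m n n) (0\<^sub>m 0 n) (0\<^sub>m 0 n)"

definition spd :: "nat \<Rightarrow> real mat \<Rightarrow> bool" where
  "spd m P \<longleftrightarrow> P \<in> carrier_mat m m \<and> P\<^sup>T = P \<and>
     (\<forall>v \<in> carrier_vec m. v \<noteq> 0\<^sub>v m \<longrightarrow> v \<bullet> (P *\<^sub>v v) > 0)"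

definition hurwitz :: "real mat \<Rightarrow> bool" where
  "hurwitz M \<longleftrightarrow> (\<forall>z. eigenvalue (map_mat complex_of_real M) z \<longrightarrow> Re z < 0)"

text \<open>K is the optimal LQR gain: K = R^-1 B^T P (R^-1 given as Rinv), P SPD stabilizing solution of the CARE.\<close>
definition optimal_LQR_gain :: "nat \<Rightarrow> real mat \<Rightarrow> real mat \<Rightarrow> real mat \<Rightarrow> real mat \<Rightarrow> real mat \<Rightarrow> bool" where
  "optimal_LQR_gain m A B Q Rinv K \<longleftrightarrow> (\<exists>P. spd m P \<and>
     P * A + A\<^sup>T * P - P * B * Rinv * B\<^sup>T * P + Q = 0\<^sub>m m m \<and>
     hurwitz (A - B * Rinv * B\<^sup>T * P) \<and>
     K = Rinv * B\<^sup>T * P)"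

definition optimal_Kalman_gain :: "nat \<Rightarrow> real mat \<Rightarrow> real mat \<Rightarrow> real mat \<Rightarrow> real mat \<Rightarrow> real mat \<Rightarrow> bool" where
  "optimal_Kalman_gain m A B C W L \<longleftrightarrow> (\<exists>S. spd m S \<and>
     A * S + S * A\<^sup>T + B * B\<^sup>T - S * C\<^sup>T * W * C * S = 0\<^sub>m m m \<and>
     hurwitz (A - S * C\<^sup>T * W * C) \<and>
     L = S * C\<^sup>T * W)"

end

theory Submission
  imports Defs
begin

(* Every block of the discretised system, cost and noise matrices is a polynomial in the periodic
   Laplacian D2, which is diagonalised by the discrete Fourier vectors x_m, with eigenvalues
   l_m = 2 cos (2 pi m / n) - 2 <= 0. Both Riccati equations therefore split into 2 x 2 problems on
   the planes {(a x_m, b x_m)}, and on each plane the stabilising solution can be written down: its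
   closed loop is the companion matrix of t^2 + k t + nu with k, nu > 0. Under q1 = sigma_m,
   r = sigma_d and Pi1 = 2 / Pi4 the resulting gains do not depend on l_m: K acts on every mode as
   (Pi3, sqrt (2 Pi3 + Pi3^2 Pi2)) and L^T as (sqrt (2 Pi4) / Pi4, 1). A matrix acting on every
   Fourier vector as one and the same scalar is that multiple of the identity, so all four gain
   blocks are scalar matrices, in particular diagonal.

   The stabilising solution P is identified on a plane through the Hamiltonian matrix of the
   Riccati equation: if (w, p) runs through a Jordan chain of the Hamiltonian for eigenvalues with
   negative real part, then P w - p is an eigenvector of the transposed closed loop for an eigenvalue
   with positive real part, hence zero. *)

abbreviation cmat :: "real mat \<Rightarrow> complex mat" where
  "cmat \<equiv> map_mat complex_of_real"

lemma cmat_add: "X \<in> carrier_mat nr nc \<Longrightarrow> Y \<in> carrier_mat nr nc \<Longrightarrow> cmat (X + Y) = cmat X + cmat Y"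
  by (rule eq_matI) auto

lemma cmat_minus: "X \<in> carrier_mat nr nc \<Longrightarrow> Y \<in> carrier_mat nr nc \<Longrightarrow> cmat (X - Y) = cmat X - cmat Y"
  by (rule eq_matI) auto

lemma cmat_mult_mult_vec:
  "X \<in> carrier_mat nr k \<Longrightarrow> Y \<in> carrier_mat k nc \<Longrightarrow> w \<in> carrier_vec nc \<Longrightarrow>
    cmat (X * Y) *\<^sub>v w = cmat X *\<^sub>v (cmat Y *\<^sub>v w)"
  by (simp add: of_real_hom.mat_hom_mult[of _ nr k _ nc])

lemma cmat_mult3_mult_vec:
  "X \<in> carrier_mat nr k \<Longrightarrow> Y \<in> carrier_mat k j \<Longrightarrow> Z \<in> carrier_mat j nc \<Longrightarrow> w \<in> carrier_vec nc \<Longrightarrow>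
    cmat (X * Y * Z) *\<^sub>v w = cmat X *\<^sub>v (cmat Y *\<^sub>v (cmat Z *\<^sub>v w))"
  by (simp del: assoc_mult_mat add: cmat_mult_mult_vec[of _ nr j _ nc] cmat_mult_mult_vec[of _ nr k _ j])

lemma index_mult_mat_vec_sum:
  "M \<in> carrier_mat nr nc \<Longrightarrow> v \<in> carrier_vec nc \<Longrightarrow> i < nr \<Longrightarrow>
    (M *\<^sub>v v) $ i = (\<Sum>j<nc. M $$ (i, j) * v $ j)"
  by (auto simp: scalar_prod_def lessThan_atLeast0 intro!: sum.cong)

lemma eigenvalue_transpose:
  fixes A :: "'a :: field mat"
  assumes "A \<in> carrier_mat n n"
  shows "eigenvalue A\<^sup>T z \<longleftrightarrow> eigenvalue A z"
  using assms by (simp add: eigenvalue_root_char_poly[of _ n])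

lemma hurwitz_transpose: "M \<in> carrier_mat n n \<Longrightarrow> hurwitz M\<^sup>T \<longleftrightarrow> hurwitz M"
  unfolding hurwitz_def map_mat_transpose[symmetric]
  by (simp add: eigenvalue_transpose[of _ n])

section \<open>Stabilising solutions of Riccati equations\<close>

lemma quadratic_root_Re_neg:
  fixes \<mu> :: complex and k \<nu> :: real
  assumes "k > 0" "\<nu> > 0" and root: "\<mu>\<^sup>2 + of_real k * \<mu> + of_real \<nu> = 0"
  shows "Re \<mu> < 0"
proof -
  have re: "(Re \<mu>)\<^sup>2 - (Im \<mu>)\<^sup>2 + k * Re \<mu> + \<nu> = 0"
    using arg_cong[OF root, of Re] by (simp add: power2_eq_square)
  have im: "Im \<mu> * (2 * Re \<mu> + k) = 0"
    using arg_cong[OF root, of Im] by (simp add: power2_eq_square algebra_simps)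
  show ?thesis
  proof (cases "Im \<mu> = 0")
    case True
    show ?thesis
    proof (rule ccontr)
      assume "\<not> Re \<mu> < 0"
      then have "k * Re \<mu> \<ge> 0" using assms by simp
      moreover have "(Re \<mu>)\<^sup>2 \<ge> 0" by simp
      moreover have "(Re \<mu>)\<^sup>2 + k * Re \<mu> + \<nu> = 0" using re True by simp
      ultimately show False using assms(2) by linarith
    qed
  next
    case False
    with im assms show ?thesis by simp
  qed
qed

lemma stable_quadratic_factorization:
  fixes k \<nu> :: real
  assumes "k > 0" "\<nu> > 0"
  obtains \<mu>1 \<mu>2 :: complex where "\<mu>1 + \<mu>2 = - of_real k" "\<mu>1 * \<mu>2 = of_real \<nu>"
    "Re \<mu>1 < 0" "Re \<mu>2 < 0"
proof
  define s where "s = csqrt ((of_real k)\<^sup>2 - 4 * of_real \<nu>)"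
  have s: "s\<^sup>2 = (of_real k)\<^sup>2 - 4 * of_real \<nu>" unfolding s_def by simp
  have root: "\<mu>\<^sup>2 + of_real k * \<mu> + of_real \<nu> = 0" if "\<mu> = (- of_real k + c) / 2" "c\<^sup>2 = s\<^sup>2" for \<mu> c
  proof -
    have "\<mu>\<^sup>2 + of_real k * \<mu> + of_real \<nu> = (c\<^sup>2 - ((of_real k)\<^sup>2 - 4 * of_real \<nu>)) / 4"
      unfolding that(1) by (simp add: field_simps power2_eq_square)
    then show ?thesis using that(2) s by simp
  qed
  show "(- of_real k + s) / 2 + (- of_real k - s) / 2 = - of_real k"
    by (simp add: field_simps)
  show "(- of_real k + s) / 2 * ((- of_real k - s) / 2) = of_real \<nu>"
    using s by (simp add: field_simps power2_eq_square)
  show "Re ((- of_real k + s) / 2) < 0"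
    by (rule quadratic_root_Re_neg[OF assms root]) simp_all
  show "Re ((- of_real k - s) / 2) < 0"
    by (rule quadratic_root_Re_neg[OF assms root[of _ "- s"]]) simp_all
qed

lemma riccati_chain_defect_eigenvector:
  fixes A G Q P :: "complex mat"
  assumes carrier: "A \<in> carrier_mat m m" "G \<in> carrier_mat m m" "Q \<in> carrier_mat m m"
      "P \<in> carrier_mat m m"
    and riccati: "P * A + A\<^sup>T * P - P * G * P + Q = 0\<^sub>m m m"
    and vec: "w \<in> carrier_vec m" "p \<in> carrier_vec m" "r \<in> carrier_vec m"
    and state: "A *\<^sub>v w - G *\<^sub>v p = \<mu> \<cdot>\<^sub>v w + r"
    and costate: "Q *\<^sub>v w + A\<^sup>T *\<^sub>v p + \<mu> \<cdot>\<^sub>v p + P *\<^sub>v r = 0\<^sub>v m"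
  shows "(A\<^sup>T - P * G) *\<^sub>v (P *\<^sub>v w - p) = (- \<mu>) \<cdot>\<^sub>v (P *\<^sub>v w - p)"
proof (rule eq_vecI)
  have "(P * A + A\<^sup>T * P - P * G * P + Q) *\<^sub>v w = 0\<^sub>v m"
    using riccati vec by (intro eq_vecI) auto
  then have riccati_w: "P *\<^sub>v (A *\<^sub>v w) + A\<^sup>T *\<^sub>v (P *\<^sub>v w) - P *\<^sub>v (G *\<^sub>v (P *\<^sub>v w)) + Q *\<^sub>v w = 0\<^sub>v m"
    using carrier vec
    by (simp add: add_mult_distrib_mat_vec[of _ m m] minus_mult_distrib_mat_vec[of _ m m]
        minus_carrier_mat assoc_mult_mat_vec[of _ m m _ m])
  have H: "(A\<^sup>T - P * G) *\<^sub>v (P *\<^sub>v w - p)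
      = A\<^sup>T *\<^sub>v (P *\<^sub>v w) - A\<^sup>T *\<^sub>v p - (P *\<^sub>v (G *\<^sub>v (P *\<^sub>v w)) - P *\<^sub>v (G *\<^sub>v p))"
    using carrier vec by (simp add: minus_mult_distrib_mat_vec[of _ m m] mult_minus_distrib_mat_vec[of _ m m])
  have P_state: "P *\<^sub>v (A *\<^sub>v w) - P *\<^sub>v (G *\<^sub>v p) = \<mu> \<cdot>\<^sub>v (P *\<^sub>v w) + P *\<^sub>v r"
    using arg_cong[OF state, of "(*\<^sub>v) P"] carrier vec
    by (simp add: mult_minus_distrib_mat_vec[of _ m m] mult_add_distrib_mat_vec[of _ m m] mult_mat_vec[of _ m m])
  fix i assume "i < dim_vec ((- \<mu>) \<cdot>\<^sub>v (P *\<^sub>v w - p))"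
  then have i: "i < m" using vec by simp
  let ?PAw = "(P *\<^sub>v (A *\<^sub>v w)) $ i" and ?AtPw = "(A\<^sup>T *\<^sub>v (P *\<^sub>v w)) $ i"
    and ?PGPw = "(P *\<^sub>v (G *\<^sub>v (P *\<^sub>v w))) $ i" and ?Qw = "(Q *\<^sub>v w) $ i"
    and ?PGp = "(P *\<^sub>v (G *\<^sub>v p)) $ i" and ?Atp = "(A\<^sup>T *\<^sub>v p) $ i" and ?Pr = "(P *\<^sub>v r) $ i"
  have riccati_i: "?PAw + ?AtPw - ?PGPw + ?Qw = 0"
    using arg_cong[OF riccati_w, of "\<lambda>v. v $ i"] i carrier vec by simp
  have state_i: "?PAw - ?PGp = \<mu> * (P *\<^sub>v w) $ i + ?Pr"
    using arg_cong[OF P_state, of "\<lambda>v. v $ i"] i carrier vec by simp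
  have costate_i: "?Qw + ?Atp + \<mu> * p $ i + ?Pr = 0"
    using arg_cong[OF costate, of "\<lambda>v. v $ i"] i carrier vec by simp
  have "((A\<^sup>T - P * G) *\<^sub>v (P *\<^sub>v w - p)) $ i = ?AtPw - ?Atp - (?PGPw - ?PGp)"
    using arg_cong[OF H, of "\<lambda>v. v $ i"] i carrier vec by simp
  also have "\<dots> = (?PAw + ?AtPw - ?PGPw + ?Qw) - (?PAw - ?PGp) - (?Qw + ?Atp + \<mu> * p $ i + ?Pr)
      + \<mu> * p $ i + ?Pr"
    by (simp add: algebra_simps)
  also have "\<dots> = - \<mu> * ((P *\<^sub>v w) $ i - p $ i)"
    unfolding riccati_i state_i costate_i by (simp add: algebra_simps)
  finally show "((A\<^sup>T - P * G) *\<^sub>v (P *\<^sub>v w - p)) $ i = ((- \<mu>) \<cdot>\<^sub>v (P *\<^sub>v w - p)) $ i"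
    using i carrier vec by simp
qed (use carrier vec in simp)

lemma stabilizing_riccati_hamiltonian_chain:
  fixes A G Q P :: "complex mat"
  assumes carrier: "A \<in> carrier_mat m m" "G \<in> carrier_mat m m" "Q \<in> carrier_mat m m"
      "P \<in> carrier_mat m m"
    and riccati: "P * A + A\<^sup>T * P - P * G * P + Q = 0\<^sub>m m m"
    and stable: "\<forall>z. eigenvalue (A\<^sup>T - P * G) z \<longrightarrow> Re z < 0" and \<mu>: "Re \<mu> < 0"
    and vec: "w \<in> carrier_vec m" "p \<in> carrier_vec m" "r \<in> carrier_vec m"
    and state: "A *\<^sub>v w - G *\<^sub>v p = \<mu> \<cdot>\<^sub>v w + r"
    and costate: "Q *\<^sub>v w + A\<^sup>T *\<^sub>v p + \<mu> \<cdot>\<^sub>v p + P *\<^sub>v r = 0\<^sub>v m"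
  shows "P *\<^sub>v w = p"
proof -
  have "P *\<^sub>v w - p = 0\<^sub>v m"
  proof (rule ccontr)
    assume "P *\<^sub>v w - p \<noteq> 0\<^sub>v m"
    then have "eigenvalue (A\<^sup>T - P * G) (- \<mu>)"
      using riccati_chain_defect_eigenvector[OF carrier riccati vec state costate] carrier vec
      unfolding eigenvalue_def eigenvector_def by (intro exI[of _ "P *\<^sub>v w - p"]) (auto simp: minus_carrier_mat)
    then show False using stable \<mu> by fastforce
  qed
  then show ?thesis
    using carrier vec by (intro eq_vecI) (auto simp: vec_eq_iff)
qed

lemma stabilizing_riccati_companion_pair:
  fixes A G Q P :: "complex mat"
  assumes carrier: "A \<in> carrier_mat m m" "G \<in> carrier_mat m m" "Q \<in> carrier_mat m m"
      "P \<in> carrier_mat m m"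
    and riccati: "P * A + A\<^sup>T * P - P * G * P + Q = 0\<^sub>m m m"
    and stable: "\<forall>z. eigenvalue (A\<^sup>T - P * G) z \<longrightarrow> Re z < 0"
    and k: "k > 0" and \<nu>: "\<nu> > 0"
    and vec: "u \<in> carrier_vec m" "v \<in> carrier_vec m" "pu \<in> carrier_vec m" "pv \<in> carrier_vec m"
    and state_u: "A *\<^sub>v u = G *\<^sub>v pu - of_real \<nu> \<cdot>\<^sub>v v"
    and costate_u: "A\<^sup>T *\<^sub>v pu = of_real \<nu> \<cdot>\<^sub>v pv - Q *\<^sub>v u"
    and state_v: "A *\<^sub>v v = G *\<^sub>v pv + u - of_real k \<cdot>\<^sub>v v"
    and costate_v: "A\<^sup>T *\<^sub>v pv = of_real k \<cdot>\<^sub>v pv - pu - Q *\<^sub>v v"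
  shows "P *\<^sub>v u = pu" "P *\<^sub>v v = pv"
proof -
  obtain \<mu>1 \<mu>2 where roots: "\<mu>1 + \<mu>2 = - of_real k" "\<mu>1 * \<mu>2 = of_real \<nu>"
      "Re \<mu>1 < 0" "Re \<mu>2 < 0"
    using stable_quadratic_factorization[OF k \<nu>] by blast
  have k_roots: "complex_of_real k = - (\<mu>1 + \<mu>2)" using roots(1) by simp
  note hamiltonian = state_u costate_u state_v costate_v
  note hamiltonian_roots = hamiltonian[unfolded k_roots roots(2)[symmetric]]
  note chain_step = stabilizing_riccati_hamiltonian_chain[OF carrier riccati stable]
  have At: "A\<^sup>T \<in> carrier_mat m m" using carrier by simp
  \<comment> \<open>\<open>(u + \<mu>1 v, v)\<close> is a Jordan chain of the Hamiltonian for \<open>\<mu>1, \<mu>2\<close>, also if \<open>\<mu>1 = \<mu>2\<close>.\<close>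
  define w where "w = u + \<mu>1 \<cdot>\<^sub>v v"
  define pw where "pw = pu + \<mu>1 \<cdot>\<^sub>v pv"
  have w: "w \<in> carrier_vec m" and pw: "pw \<in> carrier_vec m"
    unfolding w_def pw_def using vec by auto
  have Pw: "P *\<^sub>v w = pw"
  proof (rule chain_step[OF roots(3) w pw zero_carrier_vec])
    show "A *\<^sub>v w - G *\<^sub>v pw = \<mu>1 \<cdot>\<^sub>v w + 0\<^sub>v m"
      unfolding w_def pw_def using carrier vec
      by (simp add: mult_add_distrib_mat_vec[of _ m m] mult_mat_vec[of _ m m] hamiltonian_roots)
        (intro eq_vecI; simp add: algebra_simps)
    show "Q *\<^sub>v w + A\<^sup>T *\<^sub>v pw + \<mu>1 \<cdot>\<^sub>v pw + P *\<^sub>v 0\<^sub>v m = 0\<^sub>v m"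
      unfolding w_def pw_def using carrier vec At
      by (simp add: mult_add_distrib_mat_vec[of _ m m] mult_mat_vec[of _ m m] hamiltonian_roots)
        (intro eq_vecI; simp add: algebra_simps)
  qed
  show Pv: "P *\<^sub>v v = pv"
  proof (rule chain_step[OF roots(4) vec(2) vec(4) w])
    show "A *\<^sub>v v - G *\<^sub>v pv = \<mu>2 \<cdot>\<^sub>v v + w"
      unfolding w_def using carrier vec
      by (simp add: hamiltonian_roots) (intro eq_vecI; simp add: algebra_simps)
    show "Q *\<^sub>v v + A\<^sup>T *\<^sub>v pv + \<mu>2 \<cdot>\<^sub>v pv + P *\<^sub>v w = 0\<^sub>v m"
      unfolding Pw pw_def using carrier vec
      by (simp add: hamiltonian_roots) (intro eq_vecI; simp add: algebra_simps)
  qed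
  have "P *\<^sub>v u = P *\<^sub>v w - \<mu>1 \<cdot>\<^sub>v (P *\<^sub>v v)"
    unfolding w_def using carrier vec
    by (simp add: mult_add_distrib_mat_vec[of _ m m] mult_mat_vec[of _ m m])
      (intro eq_vecI; simp)
  then show "P *\<^sub>v u = pu"
    unfolding Pw Pv pw_def using vec by (intro eq_vecI) simp_all
qed

lemma optimal_Kalman_gain_dual:
  assumes opt: "optimal_Kalman_gain m A B C W L"
    and carrier: "A \<in> carrier_mat m m" "B \<in> carrier_mat m k" "C \<in> carrier_mat j m"
      "W \<in> carrier_mat j j"
    and W_sym: "W\<^sup>T = W"
  shows "optimal_LQR_gain m A\<^sup>T C\<^sup>T (B * B\<^sup>T) W L\<^sup>T"
proof -
  obtain S where spd: "spd m S"
    and fare: "A * S + S * A\<^sup>T + B * B\<^sup>T - S * C\<^sup>T * W * C * S = 0\<^sub>m m m"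
    and stable: "hurwitz (A - S * C\<^sup>T * W * C)"
    and L: "L = S * C\<^sup>T * W"
    using opt unfolding optimal_Kalman_gain_def by blast
  have S: "S \<in> carrier_mat m m" and S_sym: "S\<^sup>T = S" using spd unfolding spd_def by auto
  have SCW_transpose: "(S * C\<^sup>T * W)\<^sup>T = W * (C * S)"
    using carrier S S_sym W_sym
    by (simp add: transpose_mult[of S m m _ j] transpose_mult[of "C\<^sup>T" m j W j])
  have SCWC: "S * C\<^sup>T * W * C \<in> carrier_mat m m"
    using carrier S by (metis mult_carrier_mat transpose_carrier_mat)
  have closed_loop: "A\<^sup>T - C\<^sup>T * W * C\<^sup>T\<^sup>T * S = (A - S * C\<^sup>T * W * C)\<^sup>T"
  proof -
    have "(S * C\<^sup>T * W * C)\<^sup>T = C\<^sup>T * W * C * S"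
      using carrier S SCW_transpose
      by (simp add: transpose_mult[of _ m j _ m] assoc_mult_mat[of "C\<^sup>T" m j "W * C" m S m]
          assoc_mult_mat[of W j j C m S m])
    then show ?thesis
      using carrier SCWC by (simp add: transpose_minus[of _ m m])
  qed
  show ?thesis
    unfolding optimal_LQR_gain_def
  proof (intro exI[of _ S] conjI)
    show "S * A\<^sup>T + A\<^sup>T\<^sup>T * S - S * C\<^sup>T * W * C\<^sup>T\<^sup>T * S + B * B\<^sup>T = 0\<^sub>m m m"
      unfolding fare[symmetric] using carrier S by (intro eq_matI) (auto simp: minus_carrier_mat)
    show "hurwitz (A\<^sup>T - C\<^sup>T * W * C\<^sup>T\<^sup>T * S)"
      unfolding closed_loop using hurwitz_transpose[OF minus_carrier_mat[OF SCWC]] stable by blast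
    show "L\<^sup>T = W * C\<^sup>T\<^sup>T * S"
      using carrier S SCW_transpose unfolding L by (simp add: assoc_mult_mat[of W j j C m S m])
  qed fact
qed

lemma optimal_LQR_gain_complex_riccati:
  assumes opt: "optimal_LQR_gain m A B Q R K"
    and carrier: "A \<in> carrier_mat m m" "B \<in> carrier_mat m k" "Q \<in> carrier_mat m m"
      "R \<in> carrier_mat k k"
    and R_sym: "R\<^sup>T = R"
  obtains P where "P \<in> carrier_mat m m" "K = R * B\<^sup>T * P"
    "cmat P * cmat A + (cmat A)\<^sup>T * cmat P - cmat P * cmat (B * R * B\<^sup>T) * cmat P + cmat Q = 0\<^sub>m m m"
    "\<forall>z. eigenvalue ((cmat A)\<^sup>T - cmat P * cmat (B * R * B\<^sup>T)) z \<longrightarrow> Re z < 0"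
proof -
  define G where "G = B * R * B\<^sup>T"
  obtain P where spd: "spd m P"
    and care: "P * A + A\<^sup>T * P - P * B * R * B\<^sup>T * P + Q = 0\<^sub>m m m"
    and stable: "hurwitz (A - G * P)"
    and K: "K = R * B\<^sup>T * P"
    using opt unfolding optimal_LQR_gain_def G_def by blast
  have P: "P \<in> carrier_mat m m" and P_sym: "P\<^sup>T = P" using spd unfolding spd_def by auto
  have G: "G \<in> carrier_mat m m" unfolding G_def using carrier by auto
  have G_sym: "G\<^sup>T = G"
  proof -
    have "G\<^sup>T = B\<^sup>T\<^sup>T * (B * R)\<^sup>T"
      unfolding G_def by (rule transpose_mult) (use carrier in auto)
    also have "\<dots> = B * (R * B\<^sup>T)"
      using carrier R_sym by (simp add: transpose_mult[of B m k R k])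
    also have "\<dots> = G"
      unfolding G_def by (rule assoc_mult_mat[symmetric]) (use carrier in auto)
    finally show ?thesis .
  qed
  have "P * B * R * B\<^sup>T * P = P * G * P"
    unfolding G_def using carrier P
    by (simp add: assoc_mult_mat[of _ m k _ k] assoc_mult_mat[of _ m k _ m] assoc_mult_mat[of _ m m _ m]
        assoc_mult_mat[of _ k k _ m] assoc_mult_mat[of _ m m _ k])
  then have "cmat (P * A + A\<^sup>T * P - P * G * P + Q) = 0\<^sub>m m m"
    using care by (auto intro: eq_matI)
  then have riccati: "cmat P * cmat A + (cmat A)\<^sup>T * cmat P - cmat P * cmat G * cmat P + cmat Q = 0\<^sub>m m m"
    using carrier P G
    by (simp add: cmat_add[of _ m m] cmat_minus[of _ m m] minus_carrier_mat
        of_real_hom.mat_hom_mult[of _ m m _ m] map_mat_transpose)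
  have "(cmat A)\<^sup>T - cmat P * cmat G = (cmat (A - G * P))\<^sup>T"
    using carrier P G P_sym G_sym
    by (simp add: cmat_minus[of _ m m] of_real_hom.mat_hom_mult[of _ m m _ m] map_mat_transpose
        transpose_minus[of _ m m] transpose_mult[of _ m m _ m])
  then have stable_complex: "\<forall>z. eigenvalue ((cmat A)\<^sup>T - cmat P * cmat G) z \<longrightarrow> Re z < 0"
    using stable carrier G P unfolding hurwitz_def
    by (simp add: eigenvalue_transpose[of _ m] minus_carrier_mat)
  show ?thesis
    by (rule that[OF P K riccati[unfolded G_def] stable_complex[unfolded G_def]])
qed

section \<open>Fourier modes of the periodic Laplacian\<close>

lemma D2_dims [simp]: "dim_row (D2 n) = n" "dim_col (D2 n) = n"
  unfolding D2_def by simp_all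

lemma D2_carrier [simp]: "D2 n \<in> carrier_mat n n"
  unfolding D2_def by simp

lemma D2_symmetric: "(D2 n)\<^sup>T = D2 n"
  unfolding D2_def by (rule eq_matI) auto

lemma cyclic_successor_iff:
  fixes i j n :: nat
  assumes "i < n" "j < n"
  shows "i = (j + 1) mod n \<longleftrightarrow> j = (i + n - 1) mod n"
  using assms by (cases "i = 0"; cases "j + 1 = n") (auto simp: mod_if)

lemma D2_mult_vec:
  assumes x: "x \<in> carrier_vec n" and i: "i < n"
  shows "(cmat (D2 n) *\<^sub>v x) $ i = x $ ((i + 1) mod n) + x $ ((i + n - 1) mod n) - 2 * x $ i"
proof -
  have entry: "cmat (D2 n) $$ (i, j) = (if j = (i + 1) mod n then 1 else 0)
      + (if j = (i + n - 1) mod n then 1 else 0) - (if j = i then 2 else 0)" if "j < n" for j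
    using that i cyclic_successor_iff[OF i that] by (auto simp: D2_def)
  have "(cmat (D2 n) *\<^sub>v x) $ i = (\<Sum>j<n. cmat (D2 n) $$ (i, j) * x $ j)"
    using x i by (intro index_mult_mat_vec_sum) (auto simp: D2_def)
  also have "\<dots> = (\<Sum>j<n. (if j = (i + 1) mod n then x $ j else 0)
      + (if j = (i + n - 1) mod n then x $ j else 0) - (if j = i then 2 * x $ j else 0))"
    by (intro sum.cong) (auto simp: entry algebra_simps)
  also have "\<dots> = x $ ((i + 1) mod n) + x $ ((i + n - 1) mod n) - 2 * x $ i"
    using i by (simp add: sum.distrib sum_subtractf)
  finally show ?thesis .
qed

definition fourier_root :: "nat \<Rightarrow> nat \<Rightarrow> complex" where
  "fourier_root n m = cis (2 * pi * real m / real n)"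

definition fourier_vec :: "nat \<Rightarrow> nat \<Rightarrow> complex vec" where
  "fourier_vec n m = vec n (\<lambda>j. fourier_root n m ^ j)"

lemma fourier_vec_carrier [simp]: "fourier_vec n m \<in> carrier_vec n"
  unfolding fourier_vec_def by simp

lemma fourier_vec_dim [simp]: "dim_vec (fourier_vec n m) = n"
  unfolding fourier_vec_def by simp

lemma fourier_vec_index [simp]: "j < n \<Longrightarrow> fourier_vec n m $ j = fourier_root n m ^ j"
  unfolding fourier_vec_def by simp

lemma fourier_vec_nonzero: "n > 0 \<Longrightarrow> fourier_vec n m \<noteq> 0\<^sub>v n"
  by (auto simp: vec_eq_iff)

lemma fourier_root_pow_index_mod:
  assumes "n > 0"
  shows "fourier_root n m ^ (k mod n) = fourier_root n m ^ k"
proof -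
  have root: "fourier_root n m ^ n = 1"
    using assms unfolding fourier_root_def DeMoivre by simp
  have "fourier_root n m ^ k = fourier_root n m ^ (n * (k div n) + k mod n)"
    by simp
  also have "\<dots> = (fourier_root n m ^ n) ^ (k div n) * fourier_root n m ^ (k mod n)"
    by (simp only: power_add power_mult)
  finally show ?thesis using root by simp
qed

lemma D2_fourier_eigen:
  assumes n: "n > 0"
  shows "cmat (D2 n) *\<^sub>v fourier_vec n m
    = of_real (2 * cos (2 * pi * real m / real n) - 2) \<cdot>\<^sub>v fourier_vec n m"
proof (rule eq_vecI)
  let ?\<omega> = "fourier_root n m"
  fix i assume "i < dim_vec (of_real (2 * cos (2 * pi * real m / real n) - 2) \<cdot>\<^sub>v fourier_vec n m)"
  then have i: "i < n" by simp
  have "?\<omega> ^ (n - 1) = ?\<omega> ^ n / ?\<omega>"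
    using n by (simp add: power_diff fourier_root_def)
  also have "\<dots> = cnj ?\<omega>"
    using fourier_root_pow_index_mod[OF n, of m n] unfolding fourier_root_def
    by (simp add: cis_cnj divide_inverse)
  finally have pred: "?\<omega> ^ (n - 1) = cnj ?\<omega>" .
  have "(cmat (D2 n) *\<^sub>v fourier_vec n m) $ i
      = ?\<omega> ^ ((i + 1) mod n) + ?\<omega> ^ ((i + n - 1) mod n) - 2 * ?\<omega> ^ i"
    using D2_mult_vec[OF fourier_vec_carrier i] i n by simp
  also have "\<dots> = ?\<omega> ^ i * (?\<omega> + ?\<omega> ^ (n - 1) - 2)"
    using n unfolding fourier_root_pow_index_mod[OF n]
    by (simp add: power_add[symmetric] ring_distribs)
  also have "\<dots> = (of_real (2 * cos (2 * pi * real m / real n) - 2) \<cdot>\<^sub>v fourier_vec n m) $ i"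
    using i unfolding pred complex_add_cnj by (simp add: fourier_root_def)
  finally show "(cmat (D2 n) *\<^sub>v fourier_vec n m) $ i = \<dots>" .
qed simp

lemma cis_root_of_unity_neq_one:
  assumes n: "n > 0" and j: "j < n" and l: "l < n" and "j \<noteq> l"
  shows "cis (2 * pi * (real j - real l) / real n) \<noteq> 1"
proof
  assume "cis (2 * pi * (real j - real l) / real n) = 1"
  then obtain t :: int where "2 * pi * (real j - real l) / real n = real_of_int t * 2 * pi"
    using cos_one_2pi_int[of "2 * pi * (real j - real l) / real n"]
    by (metis Re_complex_of_real cis.sel(1) one_complex.sel(1))
  then have "(real j - real l) * (2 * pi) = (real_of_int t * real n) * (2 * pi)"
    using n by (simp add: field_simps)
  then have jl: "real j - real l = real_of_int t * real n"
    by (simp add: pi_neq_zero)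
  have "\<bar>real j - real l\<bar> < real n" using j l by linarith
  then have "\<bar>real_of_int t\<bar> * real n < 1 * real n" by (simp add: jl abs_mult)
  then have "t = 0"
    using n by (simp only: mult_less_cancel_right_pos of_nat_0_less_iff)
  then show False using jl \<open>j \<noteq> l\<close> by simp
qed

lemma fourier_orthogonality:
  assumes n: "n > 0" and j: "j < n" and l: "l < n"
  shows "(\<Sum>m<n. fourier_vec n m $ j * cnj (fourier_vec n m $ l)) = (if j = l then of_nat n else 0)"
proof -
  define \<zeta> where "\<zeta> = cis (2 * pi * (real j - real l) / real n)"
  have summand: "fourier_vec n m $ j * cnj (fourier_vec n m $ l) = \<zeta> ^ m" for m
  proof -
    let ?\<theta> = "2 * pi * real m / real n"
    have "fourier_vec n m $ j * cnj (fourier_vec n m $ l) = cis (real j * ?\<theta> - real l * ?\<theta>)"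
      using j l by (simp add: fourier_root_def DeMoivre cis_cnj cis_mult)
    also have "real j * ?\<theta> - real l * ?\<theta> = real m * (2 * pi * (real j - real l) / real n)"
      by (simp add: diff_divide_distrib algebra_simps)
    finally show ?thesis unfolding \<zeta>_def DeMoivre .
  qed
  show ?thesis
  proof (cases "j = l")
    case True
    then show ?thesis unfolding summand \<zeta>_def by simp
  next
    case False
    have "\<zeta> ^ n = cis (2 * pi * of_int (int j - int l))"
      using n unfolding \<zeta>_def DeMoivre by simp
    then have "\<zeta> ^ n = 1" by (simp add: cis_multiple_2pi)
    then have "(\<Sum>m<n. \<zeta> ^ m) = 0"
      using geometric_sum[OF cis_root_of_unity_neq_one[OF n j l False, folded \<zeta>_def]] by simp
    then show ?thesis unfolding summand using False by simp
  qed
qed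

lemma mat_eq_smult_one_if_fourier_eigen:
  fixes M :: "real mat"
  assumes n: "n > 0" and M: "M \<in> carrier_mat n n"
    and eigen: "\<And>m. m < n \<Longrightarrow> cmat M *\<^sub>v fourier_vec n m = of_real c \<cdot>\<^sub>v fourier_vec n m"
  shows "M = c \<cdot>\<^sub>m 1\<^sub>m n"
proof (rule eq_matI)
  fix i l assume "i < dim_row (c \<cdot>\<^sub>m 1\<^sub>m n)" "l < dim_col (c \<cdot>\<^sub>m 1\<^sub>m n)"
  then have i: "i < n" and l: "l < n" by simp_all
  let ?S = "\<Sum>m<n. (cmat M *\<^sub>v fourier_vec n m) $ i * cnj (fourier_vec n m $ l)"
  have "?S = (\<Sum>m<n. (\<Sum>j<n. of_real (M $$ (i, j)) * fourier_vec n m $ j) * cnj (fourier_vec n m $ l))"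
    using M i by (intro sum.cong refl, subst index_mult_mat_vec_sum[of _ n n]) auto
  also have "\<dots> = (\<Sum>m<n. \<Sum>j<n. of_real (M $$ (i, j)) * (fourier_vec n m $ j * cnj (fourier_vec n m $ l)))"
    by (simp only: sum_distrib_right mult.assoc)
  also have "\<dots> = (\<Sum>j<n. \<Sum>m<n. of_real (M $$ (i, j)) * (fourier_vec n m $ j * cnj (fourier_vec n m $ l)))"
    by (rule sum.swap)
  also have "\<dots> = (\<Sum>j<n. of_real (M $$ (i, j)) * (\<Sum>m<n. fourier_vec n m $ j * cnj (fourier_vec n m $ l)))"
    by (simp only: sum_distrib_left)
  also have "\<dots> = (\<Sum>j<n. of_real (M $$ (i, j)) * (if j = l then of_nat n else 0))"
    using n l by (intro sum.cong refl) (simp del: fourier_vec_index add: fourier_orthogonality)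
  also have "\<dots> = of_real (M $$ (i, l)) * of_nat n"
    using l by (simp add: if_distrib sum.delta' cong: if_cong)
  finally have "?S = of_real (M $$ (i, l)) * of_nat n" .
  moreover have "?S = (\<Sum>m<n. of_real c * (fourier_vec n m $ i * cnj (fourier_vec n m $ l)))"
    using eigen i by (intro sum.cong refl) (simp del: fourier_vec_index)
  moreover have "\<dots> = of_real c * (if i = l then of_nat n else 0)"
    unfolding sum_distrib_left[symmetric] fourier_orthogonality[OF n i l] ..
  ultimately have "complex_of_real (M $$ (i, l)) = of_real (if i = l then c else 0)"
    using n by (auto split: if_splits)
  then show "M $$ (i, l) = (c \<cdot>\<^sub>m 1\<^sub>m n) $$ (i, l)"
    using i l by simp
qed (use M in auto)

lemma cmat_smult_one_mult_vec:
  assumes x: "x \<in> carrier_vec n"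
  shows "cmat (c \<cdot>\<^sub>m 1\<^sub>m n) *\<^sub>v x = of_real c \<cdot>\<^sub>v x"
proof (rule eq_vecI)
  fix i assume "i < dim_vec (of_real c \<cdot>\<^sub>v x)"
  then have i: "i < n" using x by simp
  have "(cmat (c \<cdot>\<^sub>m 1\<^sub>m n) *\<^sub>v x) $ i = (\<Sum>j<n. cmat (c \<cdot>\<^sub>m 1\<^sub>m n) $$ (i, j) * x $ j)"
    using i x by (intro index_mult_mat_vec_sum) auto
  also have "\<dots> = (\<Sum>j<n. if j = i then of_real c * x $ j else 0)"
    using i by (intro sum.cong) auto
  finally show "(cmat (c \<cdot>\<^sub>m 1\<^sub>m n) *\<^sub>v x) $ i = (of_real c \<cdot>\<^sub>v x) $ i"
    using i x by simp
qed (use x in simp)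

lemma cmat_one_mult_vec: "x \<in> carrier_vec n \<Longrightarrow> cmat (1\<^sub>m n) *\<^sub>v x = x"
  by (simp add: of_real_hom.mat_hom_one)

lemma cmat_zero_mult_vec: "x \<in> carrier_vec n \<Longrightarrow> cmat (0\<^sub>m n n) *\<^sub>v x = 0 \<cdot>\<^sub>v x"
  by (rule eq_vecI) (auto simp: scalar_prod_def)

lemma one_minus_D2_mult_eigenvector:
  assumes x: "x \<in> carrier_vec n" and eigen: "cmat (D2 n) *\<^sub>v x = of_real l \<cdot>\<^sub>v x"
  shows "cmat (1\<^sub>m n - t \<cdot>\<^sub>m D2 n) *\<^sub>v x = of_real (1 - t * l) \<cdot>\<^sub>v x"
proof -
  have "cmat (1\<^sub>m n - t \<cdot>\<^sub>m D2 n) = 1\<^sub>m n - of_real t \<cdot>\<^sub>m cmat (D2 n)"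
    by (rule eq_matI) auto
  moreover have "(of_real t \<cdot>\<^sub>m cmat (D2 n)) *\<^sub>v x = of_real t \<cdot>\<^sub>v (cmat (D2 n) *\<^sub>v x)"
    using x by (intro eq_vecI) auto
  ultimately show ?thesis
    using x eigen by (simp add: minus_mult_distrib_mat_vec[of _ n n]) (intro eq_vecI; simp add: algebra_simps)
qed

lemma one_minus_D2_symmetric: "(1\<^sub>m n - t \<cdot>\<^sub>m D2 n)\<^sup>T = 1\<^sub>m n - t \<cdot>\<^sub>m D2 n"
  by (rule eq_matI) (auto simp: D2_def)

section \<open>The system matrices on a Fourier mode\<close>

definition block_vec :: "real \<Rightarrow> real \<Rightarrow> complex vec \<Rightarrow> complex vec" where
  "block_vec a b x = (of_real a \<cdot>\<^sub>v x) @\<^sub>v (of_real b \<cdot>\<^sub>v x)"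

lemma block_vec_dim [simp]: "dim_vec (block_vec a b x) = dim_vec x + dim_vec x"
  unfolding block_vec_def by simp

lemma block_vec_carrier [simp]: "x \<in> carrier_vec n \<Longrightarrow> block_vec a b x \<in> carrier_vec (n + n)"
  unfolding block_vec_def by auto

lemma block_vec_index:
  "i < dim_vec x + dim_vec x \<Longrightarrow>
    block_vec a b x $ i = (if i < dim_vec x then of_real a * x $ i else of_real b * x $ (i - dim_vec x))"
  unfolding block_vec_def by auto

lemma block_vec_add [simp]: "block_vec a b x + block_vec c d x = block_vec (a + c) (b + d) x"
  by (rule eq_vecI) (auto simp: block_vec_index algebra_simps)

lemma block_vec_diff [simp]: "block_vec a b x - block_vec c d x = block_vec (a - c) (b - d) x"
  by (rule eq_vecI) (auto simp: block_vec_index algebra_simps)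

lemma block_vec_smult [simp]: "of_real c \<cdot>\<^sub>v block_vec a b x = block_vec (c * a) (c * b) x"
  by (rule eq_vecI) (auto simp: block_vec_index algebra_simps)

lemma block_vec_eq_iff:
  assumes "x \<noteq> 0\<^sub>v (dim_vec x)"
  shows "block_vec a b x = block_vec c d x \<longleftrightarrow> a = c \<and> b = d"
proof
  assume eq: "block_vec a b x = block_vec c d x"
  obtain i where i: "i < dim_vec x" "x $ i \<noteq> 0"
    using assms by (auto simp: vec_eq_iff)
  have "of_real a * x $ i = of_real c * x $ i" "of_real b * x $ i = of_real d * x $ i"
    using arg_cong[OF eq, of "\<lambda>y. y $ i"] arg_cong[OF eq, of "\<lambda>y. y $ (dim_vec x + i)"] i
    by (simp_all add: block_vec_index)
  then show "a = c \<and> b = d" using i(2) by simp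
qed simp

lemma four_block_mult_block_vec:
  assumes M: "M1 \<in> carrier_mat n n" "M2 \<in> carrier_mat n n" "M3 \<in> carrier_mat n n" "M4 \<in> carrier_mat n n"
    and x: "x \<in> carrier_vec n"
    and eigen: "cmat M1 *\<^sub>v x = of_real m1 \<cdot>\<^sub>v x" "cmat M2 *\<^sub>v x = of_real m2 \<cdot>\<^sub>v x"
      "cmat M3 *\<^sub>v x = of_real m3 \<cdot>\<^sub>v x" "cmat M4 *\<^sub>v x = of_real m4 \<cdot>\<^sub>v x"
  shows "cmat (four_block_mat M1 M2 M3 M4) *\<^sub>v block_vec a b x
    = block_vec (m1 * a + m2 * b) (m3 * a + m4 * b) x"
proof -
  have "cmat (four_block_mat M1 M2 M3 M4) = four_block_mat (cmat M1) (cmat M2) (cmat M3) (cmat M4)"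
    by (rule map_four_block_mat[OF M])
  also have "\<dots> *\<^sub>v block_vec a b x
      = (cmat M1 *\<^sub>v (of_real a \<cdot>\<^sub>v x) + cmat M2 *\<^sub>v (of_real b \<cdot>\<^sub>v x))
        @\<^sub>v (cmat M3 *\<^sub>v (of_real a \<cdot>\<^sub>v x) + cmat M4 *\<^sub>v (of_real b \<cdot>\<^sub>v x))"
    unfolding block_vec_def by (rule four_block_mat_mult_vec) (use M x in auto)
  also have "\<dots> = block_vec (m1 * a + m2 * b) (m3 * a + m4 * b) x"
    unfolding block_vec_def using M x eigen
    by (subst (1 2 3 4) mult_mat_vec[of _ n n]) (auto intro!: eq_vecI simp: algebra_simps)
  finally show ?thesis .
qed

lemma sys_A_carrier [simp]: "sys_A n \<in> carrier_mat (n + n) (n + n)"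
  unfolding sys_A_def by (rule four_block_carrier_mat) auto

lemma sys_A_mult_block_vec:
  assumes "x \<in> carrier_vec n" and "cmat (D2 n) *\<^sub>v x = of_real l \<cdot>\<^sub>v x"
  shows "cmat (sys_A n) *\<^sub>v block_vec a b x = block_vec b (l * a) x"
  unfolding sys_A_def
  using four_block_mult_block_vec[of "0\<^sub>m n n" n "1\<^sub>m n" "D2 n" "0\<^sub>m n n" x 0 1 l 0 a b]
    cmat_one_mult_vec[of x n] cmat_zero_mult_vec[of x n] assms
  by simp

lemma sys_A_transpose_mult_block_vec:
  assumes "x \<in> carrier_vec n" and "cmat (D2 n) *\<^sub>v x = of_real l \<cdot>\<^sub>v x"
  shows "(cmat (sys_A n))\<^sup>T *\<^sub>v block_vec a b x = block_vec (l * b) a x"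
proof -
  have "(sys_A n)\<^sup>T = four_block_mat (0\<^sub>m n n) (D2 n) (1\<^sub>m n) (0\<^sub>m n n)"
    unfolding sys_A_def by (subst transpose_four_block_mat[of _ n n _ n _ n]) (auto simp: D2_symmetric)
  then show ?thesis
    using four_block_mult_block_vec[of "0\<^sub>m n n" n "D2 n" "1\<^sub>m n" "0\<^sub>m n n" x 0 l 1 0 a b]
      cmat_one_mult_vec[of x n] cmat_zero_mult_vec[of x n] assms
    by (simp add: map_mat_transpose)
qed

lemma sys_B_index: "i < n + n \<Longrightarrow> j < n \<Longrightarrow> sys_B n $$ (i, j) = (if i = n + j then 1 else 0)"
  unfolding sys_B_def by auto

lemma sys_C_index: "i < n \<Longrightarrow> j < n + n \<Longrightarrow> sys_C n c $$ (i, j) = (if j = i then c else 0)"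
  unfolding sys_C_def by auto

lemma sys_B_carrier [simp]: "sys_B n \<in> carrier_mat (n + n) n"
  unfolding sys_B_def by (metis four_block_carrier_mat add_0_right one_carrier_mat zero_carrier_mat)

lemma sys_C_carrier [simp]: "sys_C n c \<in> carrier_mat n (n + n)"
  unfolding sys_C_def by (metis four_block_carrier_mat add_0_right smult_carrier_mat one_carrier_mat zero_carrier_mat)

lemma sys_B_dims [simp]: "dim_row (sys_B n) = n + n" "dim_col (sys_B n) = n"
  using sys_B_carrier by (auto simp del: sys_B_carrier)

lemma sys_C_dims [simp]: "dim_row (sys_C n c) = n" "dim_col (sys_C n c) = n + n"
  using sys_C_carrier by (auto simp del: sys_C_carrier)

lemma sys_B_transpose_mult_block_vec:
  assumes x: "x \<in> carrier_vec n"
  shows "(cmat (sys_B n))\<^sup>T *\<^sub>v block_vec a b x = of_real b \<cdot>\<^sub>v x"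
proof (rule eq_vecI)
  fix i assume "i < dim_vec (of_real b \<cdot>\<^sub>v x)"
  then have i: "i < n" using x by simp
  have "((cmat (sys_B n))\<^sup>T *\<^sub>v block_vec a b x) $ i
      = (\<Sum>j<n + n. (cmat (sys_B n))\<^sup>T $$ (i, j) * block_vec a b x $ j)"
    using i x by (intro index_mult_mat_vec_sum) auto
  also have "\<dots> = (\<Sum>j<n + n. if j = n + i then block_vec a b x $ j else 0)"
    using i by (intro sum.cong) (auto simp: sys_B_index)
  finally show "((cmat (sys_B n))\<^sup>T *\<^sub>v block_vec a b x) $ i = (of_real b \<cdot>\<^sub>v x) $ i"
    using i x by (simp add: block_vec_index)
qed (use x in simp)

lemma sys_B_mult_smult:
  assumes x: "x \<in> carrier_vec n"
  shows "cmat (sys_B n) *\<^sub>v (of_real c \<cdot>\<^sub>v x) = block_vec 0 c x"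
proof (rule eq_vecI)
  fix i assume "i < dim_vec (block_vec 0 c x)"
  then have i: "i < n + n" using x by simp
  have "(cmat (sys_B n) *\<^sub>v (of_real c \<cdot>\<^sub>v x)) $ i
      = (\<Sum>j<n. cmat (sys_B n) $$ (i, j) * (of_real c \<cdot>\<^sub>v x) $ j)"
    using i x by (intro index_mult_mat_vec_sum) auto
  also have "\<dots> = (\<Sum>j<n. if j + n = i then of_real c * x $ j else 0)"
    using i x by (intro sum.cong) (auto simp: sys_B_index)
  also have "\<dots> = (if i < n then 0 else of_real c * x $ (i - n))"
  proof (cases "i < n")
    case False
    then have "(\<Sum>j<n. if j + n = i then of_real c * x $ j else 0) = (\<Sum>j<n. if j = i - n then of_real c * x $ j else 0)"
      by (intro sum.cong) auto
    then show ?thesis using False i by simp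
  qed simp
  finally show "(cmat (sys_B n) *\<^sub>v (of_real c \<cdot>\<^sub>v x)) $ i = block_vec 0 c x $ i"
    using i x by (simp add: block_vec_index)
qed (use x in simp)

lemma sys_C_mult_block_vec:
  assumes x: "x \<in> carrier_vec n"
  shows "cmat (sys_C n c) *\<^sub>v block_vec a b x = of_real (c * a) \<cdot>\<^sub>v x"
proof (rule eq_vecI)
  fix i assume "i < dim_vec (of_real (c * a) \<cdot>\<^sub>v x)"
  then have i: "i < n" using x by simp
  have "(cmat (sys_C n c) *\<^sub>v block_vec a b x) $ i
      = (\<Sum>j<n + n. cmat (sys_C n c) $$ (i, j) * block_vec a b x $ j)"
    using i x by (intro index_mult_mat_vec_sum) auto
  also have "\<dots> = (\<Sum>j<n + n. if j = i then of_real c * block_vec a b x $ j else 0)"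
    using i by (intro sum.cong) (auto simp: sys_C_index)
  finally show "(cmat (sys_C n c) *\<^sub>v block_vec a b x) $ i = (of_real (c * a) \<cdot>\<^sub>v x) $ i"
    using i x by (simp add: block_vec_index)
qed (use x in simp)

lemma sys_C_transpose_mult_smult:
  assumes x: "x \<in> carrier_vec n"
  shows "(cmat (sys_C n c))\<^sup>T *\<^sub>v (of_real d \<cdot>\<^sub>v x) = block_vec (c * d) 0 x"
proof (rule eq_vecI)
  fix i assume "i < dim_vec (block_vec (c * d) 0 x)"
  then have i: "i < n + n" using x by simp
  have "((cmat (sys_C n c))\<^sup>T *\<^sub>v (of_real d \<cdot>\<^sub>v x)) $ i
      = (\<Sum>j<n. (cmat (sys_C n c))\<^sup>T $$ (i, j) * (of_real d \<cdot>\<^sub>v x) $ j)"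
    using i x by (intro index_mult_mat_vec_sum) auto
  also have "\<dots> = (\<Sum>j<n. if j = i then of_real (c * d) * x $ j else 0)"
    using i x by (intro sum.cong) (auto simp: sys_C_index)
  finally show "((cmat (sys_C n c))\<^sup>T *\<^sub>v (of_real d \<cdot>\<^sub>v x)) $ i = block_vec (c * d) 0 x $ i"
    using i x by (simp add: block_vec_index)
qed (use x in simp)

lemma sys_B_smult_outer_mult_block_vec:
  assumes x: "x \<in> carrier_vec n"
  shows "cmat (sys_B n * (c \<cdot>\<^sub>m 1\<^sub>m n) * (sys_B n)\<^sup>T) *\<^sub>v block_vec a b x = block_vec 0 (c * b) x"
proof -
  have "cmat (c \<cdot>\<^sub>m 1\<^sub>m n) *\<^sub>v (of_real b \<cdot>\<^sub>v x) = of_real (c * b) \<cdot>\<^sub>v x"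
    using x by (simp add: cmat_smult_one_mult_vec smult_smult_assoc)
  then show ?thesis
    using x
    by (simp only: cmat_mult3_mult_vec[of _ "n + n" n _ n _ "n + n"] map_mat_transpose[symmetric]
        sys_B_transpose_mult_block_vec sys_B_mult_smult sys_B_carrier transpose_carrier_mat
        smult_carrier_mat one_carrier_mat block_vec_carrier)
qed

lemma sys_B_outer_mult_block_vec:
  assumes x: "x \<in> carrier_vec n"
  shows "cmat (sys_B n * (sys_B n)\<^sup>T) *\<^sub>v block_vec a b x = block_vec 0 b x"
  using x
  by (simp only: cmat_mult_mult_vec[of _ "n + n" n _ "n + n"] map_mat_transpose[symmetric]
      sys_B_transpose_mult_block_vec sys_B_mult_smult sys_B_carrier transpose_carrier_mat
      block_vec_carrier)

lemma sys_C_outer_mult_block_vec: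
  assumes x: "x \<in> carrier_vec n" and W: "W \<in> carrier_mat n n"
    and eigen: "cmat W *\<^sub>v x = of_real w \<cdot>\<^sub>v x"
  shows "cmat ((sys_C n c)\<^sup>T * W * sys_C n c) *\<^sub>v block_vec a b x = block_vec (c * (w * (c * a))) 0 x"
proof -
  have "cmat W *\<^sub>v (of_real d \<cdot>\<^sub>v x) = of_real (w * d) \<cdot>\<^sub>v x" for d
    using x W eigen by (simp add: mult_mat_vec[of _ n n] smult_smult_assoc mult.commute)
  then show ?thesis
    using x W
    by (simp only: cmat_mult3_mult_vec[of _ "n + n" n _ n _ "n + n"] map_mat_transpose[symmetric]
        sys_C_mult_block_vec sys_C_transpose_mult_smult sys_C_carrier transpose_carrier_mat
        block_vec_carrier)
qed

lemma LQR_cost_mult_block_vec: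
  assumes x: "x \<in> carrier_vec n" and eigen: "cmat (D2 n) *\<^sub>v x = of_real l \<cdot>\<^sub>v x"
  shows "cmat (four_block_mat (1\<^sub>m n - t \<cdot>\<^sub>m D2 n) (0\<^sub>m n n) (0\<^sub>m n n) (q \<cdot>\<^sub>m 1\<^sub>m n)) *\<^sub>v block_vec a b x
    = block_vec ((1 - t * l) * a) (q * b) x"
  using four_block_mult_block_vec[of "1\<^sub>m n - t \<cdot>\<^sub>m D2 n" n "0\<^sub>m n n" "0\<^sub>m n n" "q \<cdot>\<^sub>m 1\<^sub>m n" x
      "1 - t * l" 0 0 q a b]
    one_minus_D2_mult_eigenvector[OF x eigen] cmat_smult_one_mult_vec[OF x] cmat_zero_mult_vec[OF x] x
  by (simp add: minus_carrier_mat)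

lemma sum_lessThan_add: "(\<Sum>j<a + b. f j) = (\<Sum>j<a. f j) + (\<Sum>j<b. f (a + j))"
  for a b :: nat
  by (induct b) (auto simp: add.commute add.left_commute)

lemma mult_block_vec:
  assumes K: "K \<in> carrier_mat r (n + n)" and x: "x \<in> carrier_vec n"
  shows "cmat K *\<^sub>v block_vec a b x
    = of_real a \<cdot>\<^sub>v (cmat (mat r n (\<lambda>(i, j). K $$ (i, j))) *\<^sub>v x)
      + of_real b \<cdot>\<^sub>v (cmat (mat r n (\<lambda>(i, j). K $$ (i, j + n))) *\<^sub>v x)"
proof (rule eq_vecI)
  fix i assume "i < dim_vec (of_real a \<cdot>\<^sub>v (cmat (mat r n (\<lambda>(i, j). K $$ (i, j))) *\<^sub>v x)
      + of_real b \<cdot>\<^sub>v (cmat (mat r n (\<lambda>(i, j). K $$ (i, j + n))) *\<^sub>v x))"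
  then have i: "i < r" by simp
  have "(cmat K *\<^sub>v block_vec a b x) $ i = (\<Sum>j<n + n. of_real (K $$ (i, j)) * block_vec a b x $ j)"
    using K x i by (subst index_mult_mat_vec_sum[of _ r "n + n"]) auto
  also have "\<dots> = (\<Sum>j<n. of_real (K $$ (i, j)) * (of_real a * x $ j))
      + (\<Sum>j<n. of_real (K $$ (i, n + j)) * (of_real b * x $ j))"
    unfolding sum_lessThan_add using x by (simp add: block_vec_index)
  also have "\<dots> = of_real a * (cmat (mat r n (\<lambda>(i, j). K $$ (i, j))) *\<^sub>v x) $ i
      + of_real b * (cmat (mat r n (\<lambda>(i, j). K $$ (i, j + n))) *\<^sub>v x) $ i"
    using x i by (subst (1 2) index_mult_mat_vec_sum[of _ r n]) (auto simp: sum_distrib_left algebra_simps)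
  also have "\<dots> = (of_real a \<cdot>\<^sub>v (cmat (mat r n (\<lambda>(i, j). K $$ (i, j))) *\<^sub>v x)
      + of_real b \<cdot>\<^sub>v (cmat (mat r n (\<lambda>(i, j). K $$ (i, j + n))) *\<^sub>v x)) $ i"
    using i by (simp del: index_mult_mat_vec)
  finally show "(cmat K *\<^sub>v block_vec a b x) $ i = \<dots>" .
qed (use K in simp)

lemma gain_blocks_eq_smult_one:
  fixes K :: "real mat"
  assumes n: "n > 0" and K: "K \<in> carrier_mat n (n + n)"
    and left: "\<And>m. m < n \<Longrightarrow> cmat K *\<^sub>v block_vec 1 0 (fourier_vec n m) = of_real c1 \<cdot>\<^sub>v fourier_vec n m"
    and right: "\<And>m. m < n \<Longrightarrow> cmat K *\<^sub>v block_vec 0 1 (fourier_vec n m) = of_real c2 \<cdot>\<^sub>v fourier_vec n m"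
  shows "mat n n (\<lambda>(i, j). K $$ (i, j)) = c1 \<cdot>\<^sub>m 1\<^sub>m n"
    "mat n n (\<lambda>(i, j). K $$ (i, j + n)) = c2 \<cdot>\<^sub>m 1\<^sub>m n"
proof -
  have blocks: "cmat K *\<^sub>v block_vec a b (fourier_vec n m)
      = of_real a \<cdot>\<^sub>v (cmat (mat n n (\<lambda>(i, j). K $$ (i, j))) *\<^sub>v fourier_vec n m)
        + of_real b \<cdot>\<^sub>v (cmat (mat n n (\<lambda>(i, j). K $$ (i, j + n))) *\<^sub>v fourier_vec n m)" for a b m
    by (rule mult_block_vec[OF K fourier_vec_carrier])
  have drop_zero: "y + (0 :: complex) \<cdot>\<^sub>v z = y" "(0 :: complex) \<cdot>\<^sub>v z + y = y"
    if "dim_vec z = dim_vec y" for y z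
    using that by (auto intro!: eq_vecI)
  show "mat n n (\<lambda>(i, j). K $$ (i, j)) = c1 \<cdot>\<^sub>m 1\<^sub>m n"
    by (rule mat_eq_smult_one_if_fourier_eigen[OF n]) (use blocks[of 1 0] left in \<open>simp_all add: drop_zero\<close>)
  show "mat n n (\<lambda>(i, j). K $$ (i, j + n)) = c2 \<cdot>\<^sub>m 1\<^sub>m n"
    by (rule mat_eq_smult_one_if_fourier_eigen[OF n]) (use blocks[of 0 1] right in \<open>simp_all add: drop_zero\<close>)
qed

section \<open>The optimal gains\<close>

lemma LQR_riccati_on_mode:
  fixes n :: nat and p q l :: real and P :: "real mat"
  defines "k \<equiv> sqrt (2 * p + p\<^sup>2 * q)"
    and "G \<equiv> sys_B n * (p\<^sup>2 \<cdot>\<^sub>m 1\<^sub>m n) * (sys_B n)\<^sup>T"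
    and "Q \<equiv> four_block_mat (1\<^sub>m n - (2 / p) \<cdot>\<^sub>m D2 n) (0\<^sub>m n n) (0\<^sub>m n n) (q \<cdot>\<^sub>m 1\<^sub>m n)"
  assumes p: "p > 0" and q: "q > 0"
    and x: "x \<in> carrier_vec n" "x \<noteq> 0\<^sub>v n"
    and eigen: "cmat (D2 n) *\<^sub>v x = of_real l \<cdot>\<^sub>v x" and l: "l \<le> 0"
    and P: "P \<in> carrier_mat (n + n) (n + n)"
    and riccati: "cmat P * cmat (sys_A n) + (cmat (sys_A n))\<^sup>T * cmat P - cmat P * cmat G * cmat P
      + cmat Q = 0\<^sub>m (n + n) (n + n)"
    and stable: "\<forall>z. eigenvalue ((cmat (sys_A n))\<^sup>T - cmat P * cmat G) z \<longrightarrow> Re z < 0"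
  shows "cmat P *\<^sub>v block_vec 1 0 x = block_vec (k * (p - l) / p\<^sup>2) (1 / p) x"
    "cmat P *\<^sub>v block_vec 0 1 x = block_vec (1 / p) (k / p\<^sup>2) x"
proof -
  have k: "k > 0" and kk: "k * k = 2 * p + p\<^sup>2 * q"
    unfolding k_def using p q by (simp_all add: add_pos_pos)
  have \<nu>: "p - l > 0" using p l by simp
  have p_nonzero: "p \<noteq> 0" using p by simp
  have carrier: "cmat (sys_A n) \<in> carrier_mat (n + n) (n + n)" "cmat G \<in> carrier_mat (n + n) (n + n)"
    "cmat Q \<in> carrier_mat (n + n) (n + n)" "cmat P \<in> carrier_mat (n + n) (n + n)"
    unfolding G_def Q_def using P by (auto simp: minus_carrier_mat)
  note A_act = sys_A_mult_block_vec[OF x(1) eigen]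
    and At_act = sys_A_transpose_mult_block_vec[OF x(1) eigen]
    and G_act = sys_B_smult_outer_mult_block_vec[OF x(1), of "p\<^sup>2", folded G_def]
    and Q_act = LQR_cost_mult_block_vec[OF x(1) eigen, of "2 / p" q, folded Q_def]
    and block_eq = block_vec_eq_iff[of x, unfolded carrier_vecD[OF x(1)], OF x(2)]
  \<comment> \<open>On the plane the closed loop \<open>A - G P\<close> is the companion matrix of \<open>t\<^sup>2 + k t + (p - l)\<close>.\<close>
  have state_u: "cmat (sys_A n) *\<^sub>v block_vec 1 0 x
      = cmat G *\<^sub>v block_vec (k * (p - l) / p\<^sup>2) (1 / p) x - of_real (p - l) \<cdot>\<^sub>v block_vec 0 1 x"
    by (simp add: A_act G_act block_eq del: of_real_diff) (simp add: power2_eq_square p_nonzero)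
  have costate_u: "(cmat (sys_A n))\<^sup>T *\<^sub>v block_vec (k * (p - l) / p\<^sup>2) (1 / p) x
      = of_real (p - l) \<cdot>\<^sub>v block_vec (1 / p) (k / p\<^sup>2) x - cmat Q *\<^sub>v block_vec 1 0 x"
    by (simp add: At_act Q_act block_eq del: of_real_diff) (simp add: field_simps p_nonzero)
  have state_v: "cmat (sys_A n) *\<^sub>v block_vec 0 1 x
      = cmat G *\<^sub>v block_vec (1 / p) (k / p\<^sup>2) x + block_vec 1 0 x - of_real k \<cdot>\<^sub>v block_vec 0 1 x"
    by (simp add: A_act G_act block_eq del: of_real_diff) (simp add: power2_eq_square p_nonzero)
  have costate_v: "(cmat (sys_A n))\<^sup>T *\<^sub>v block_vec (1 / p) (k / p\<^sup>2) x
      = of_real k \<cdot>\<^sub>v block_vec (1 / p) (k / p\<^sup>2) x - block_vec (k * (p - l) / p\<^sup>2) (1 / p) x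
        - cmat Q *\<^sub>v block_vec 0 1 x"
    by (simp add: At_act Q_act block_eq del: of_real_diff) (simp add: field_simps power2_eq_square p_nonzero kk)
  show "cmat P *\<^sub>v block_vec 1 0 x = block_vec (k * (p - l) / p\<^sup>2) (1 / p) x"
    "cmat P *\<^sub>v block_vec 0 1 x = block_vec (1 / p) (k / p\<^sup>2) x"
    using stabilizing_riccati_companion_pair[OF carrier riccati stable k \<nu> block_vec_carrier[OF x(1)]
        block_vec_carrier[OF x(1)] block_vec_carrier[OF x(1)] block_vec_carrier[OF x(1)]
        state_u costate_u state_v costate_v] by blast+
qed

text \<open>The data \<open>A, G, Q\<close> below are those of the dual LQR problem, see \<open>optimal_Kalman_gain_dual\<close>.\<close>

lemma Kalman_riccati_on_mode:
  fixes n :: nat and p l :: real and S :: "real mat"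
  defines "k \<equiv> sqrt (2 * p)" and "w \<equiv> 1 - 2 / p * l"
    and "A \<equiv> (sys_A n)\<^sup>T"
    and "G \<equiv> (sys_C n p)\<^sup>T * (1\<^sub>m n - (2 / p) \<cdot>\<^sub>m D2 n) * sys_C n p"
    and "Q \<equiv> sys_B n * (sys_B n)\<^sup>T"
  assumes p: "p > 0"
    and x: "x \<in> carrier_vec n" "x \<noteq> 0\<^sub>v n"
    and eigen: "cmat (D2 n) *\<^sub>v x = of_real l \<cdot>\<^sub>v x" and l: "l \<le> 0"
    and S: "S \<in> carrier_mat (n + n) (n + n)"
    and riccati: "cmat S * cmat A + (cmat A)\<^sup>T * cmat S - cmat S * cmat G * cmat S
      + cmat Q = 0\<^sub>m (n + n) (n + n)"
    and stable: "\<forall>z. eigenvalue ((cmat A)\<^sup>T - cmat S * cmat G) z \<longrightarrow> Re z < 0"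
  shows "cmat S *\<^sub>v block_vec 0 1 x = block_vec (1 / (p * w)) (k * (p - l) / (p\<^sup>2 * w)) x"
    "cmat S *\<^sub>v block_vec 1 0 x = block_vec (k / (p\<^sup>2 * w)) (1 / (p * w)) x"
proof -
  have k: "k > 0" and kk: "k * k = 2 * p" unfolding k_def using p by simp_all
  have \<nu>: "p - l > 0" using p l by simp
  have p_nonzero: "p \<noteq> 0" using p by simp
  have w_nonzero: "w \<noteq> 0"
    unfolding w_def using p l by (simp add: mult_nonneg_nonpos2 add_pos_nonneg)
  have l_eq: "l = p * (1 - w) / 2" unfolding w_def using p_nonzero by (simp add: field_simps)
  have carrier: "cmat A \<in> carrier_mat (n + n) (n + n)" "cmat G \<in> carrier_mat (n + n) (n + n)"
    "cmat Q \<in> carrier_mat (n + n) (n + n)" "cmat S \<in> carrier_mat (n + n) (n + n)"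
    unfolding A_def G_def Q_def using S by (auto simp: minus_carrier_mat)
  have A_act: "cmat A *\<^sub>v block_vec a b x = block_vec (l * b) a x" for a b
    unfolding A_def map_mat_transpose[symmetric] by (rule sys_A_transpose_mult_block_vec[OF x(1) eigen])
  have At_act: "(cmat A)\<^sup>T *\<^sub>v block_vec a b x = block_vec b (l * a) x" for a b
    unfolding A_def map_mat_transpose[symmetric] transpose_transpose
    by (rule sys_A_mult_block_vec[OF x(1) eigen])
  have G_act: "cmat G *\<^sub>v block_vec a b x = block_vec (p * (w * (p * a))) 0 x" for a b
    unfolding G_def w_def
    by (rule sys_C_outer_mult_block_vec[OF x(1) _ one_minus_D2_mult_eigenvector[OF x(1) eigen]])
      (simp add: minus_carrier_mat)
  note Q_act = sys_B_outer_mult_block_vec[OF x(1), folded Q_def]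
    and block_eq = block_vec_eq_iff[of x, unfolded carrier_vecD[OF x(1)], OF x(2)]
  have state_u: "cmat A *\<^sub>v block_vec 0 1 x
      = cmat G *\<^sub>v block_vec (1 / (p * w)) (k * (p - l) / (p\<^sup>2 * w)) x - of_real (p - l) \<cdot>\<^sub>v block_vec 1 0 x"
    by (simp add: A_act G_act block_eq del: of_real_diff) (simp add: field_simps power2_eq_square p_nonzero w_nonzero)
  have costate_u: "(cmat A)\<^sup>T *\<^sub>v block_vec (1 / (p * w)) (k * (p - l) / (p\<^sup>2 * w)) x
      = of_real (p - l) \<cdot>\<^sub>v block_vec (k / (p\<^sup>2 * w)) (1 / (p * w)) x - cmat Q *\<^sub>v block_vec 0 1 x"
    by (simp add: At_act Q_act block_eq del: of_real_diff) (simp add: l_eq field_simps power2_eq_square p_nonzero w_nonzero)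
  have state_v: "cmat A *\<^sub>v block_vec 1 0 x
      = cmat G *\<^sub>v block_vec (k / (p\<^sup>2 * w)) (1 / (p * w)) x + block_vec 0 1 x - of_real k \<cdot>\<^sub>v block_vec 1 0 x"
    by (simp add: A_act G_act block_eq del: of_real_diff) (simp add: field_simps power2_eq_square p_nonzero w_nonzero)
  have costate_v: "(cmat A)\<^sup>T *\<^sub>v block_vec (k / (p\<^sup>2 * w)) (1 / (p * w)) x
      = of_real k \<cdot>\<^sub>v block_vec (k / (p\<^sup>2 * w)) (1 / (p * w)) x
        - block_vec (1 / (p * w)) (k * (p - l) / (p\<^sup>2 * w)) x - cmat Q *\<^sub>v block_vec 1 0 x"
    by (simp add: At_act Q_act block_eq del: of_real_diff) (simp add: field_simps power2_eq_square p_nonzero w_nonzero kk)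
  show "cmat S *\<^sub>v block_vec 0 1 x = block_vec (1 / (p * w)) (k * (p - l) / (p\<^sup>2 * w)) x"
    "cmat S *\<^sub>v block_vec 1 0 x = block_vec (k / (p\<^sup>2 * w)) (1 / (p * w)) x"
    using stabilizing_riccati_companion_pair[OF carrier riccati stable k \<nu> block_vec_carrier[OF x(1)]
        block_vec_carrier[OF x(1)] block_vec_carrier[OF x(1)] block_vec_carrier[OF x(1)]
        state_u costate_u state_v costate_v] by blast+
qed

lemma LQR_gain_blocks:
  fixes p q :: real and K :: "real mat"
  assumes n: "n > 0" and p: "p > 0" and q: "q > 0"
    and opt: "optimal_LQR_gain (2 * n) (sys_A n) (sys_B n)
      (four_block_mat (1\<^sub>m n - (2 / p) \<cdot>\<^sub>m D2 n) (0\<^sub>m n n) (0\<^sub>m n n) (q \<cdot>\<^sub>m 1\<^sub>m n))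
      (p\<^sup>2 \<cdot>\<^sub>m 1\<^sub>m n) K"
  shows "mat n n (\<lambda>(i, j). K $$ (i, j)) = p \<cdot>\<^sub>m 1\<^sub>m n"
    "mat n n (\<lambda>(i, j). K $$ (i, j + n)) = sqrt (2 * p + p\<^sup>2 * q) \<cdot>\<^sub>m 1\<^sub>m n"
proof -
  define R where "R = p\<^sup>2 \<cdot>\<^sub>m 1\<^sub>m n"
  have R: "R \<in> carrier_mat n n" and R_sym: "R\<^sup>T = R"
    unfolding R_def by (auto intro: eq_matI)
  have cost: "four_block_mat (1\<^sub>m n - (2 / p) \<cdot>\<^sub>m D2 n) (0\<^sub>m n n) (0\<^sub>m n n) (q \<cdot>\<^sub>m 1\<^sub>m n)
      \<in> carrier_mat (n + n) (n + n)"
    by (rule four_block_carrier_mat) (auto simp: minus_carrier_mat)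
  obtain P where P: "P \<in> carrier_mat (n + n) (n + n)" and K: "K = R * (sys_B n)\<^sup>T * P"
    and riccati_stable: "cmat P * cmat (sys_A n) + (cmat (sys_A n))\<^sup>T * cmat P
        - cmat P * cmat (sys_B n * R * (sys_B n)\<^sup>T) * cmat P
        + cmat (four_block_mat (1\<^sub>m n - (2 / p) \<cdot>\<^sub>m D2 n) (0\<^sub>m n n) (0\<^sub>m n n) (q \<cdot>\<^sub>m 1\<^sub>m n))
        = 0\<^sub>m (n + n) (n + n)"
      "\<forall>z. eigenvalue ((cmat (sys_A n))\<^sup>T - cmat P * cmat (sys_B n * R * (sys_B n)\<^sup>T)) z \<longrightarrow> Re z < 0"
    using optimal_LQR_gain_complex_riccati[OF opt[unfolded mult_2, folded R_def] sys_A_carrier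
        sys_B_carrier cost R R_sym] by blast
  have K_carrier: "K \<in> carrier_mat n (n + n)"
    unfolding K using R P by (metis mult_carrier_mat sys_B_carrier transpose_carrier_mat)
  have "cmat K *\<^sub>v block_vec 1 0 (fourier_vec n m) = of_real p \<cdot>\<^sub>v fourier_vec n m
      \<and> cmat K *\<^sub>v block_vec 0 1 (fourier_vec n m) = of_real (sqrt (2 * p + p\<^sup>2 * q)) \<cdot>\<^sub>v fourier_vec n m"
    if "m < n" for m
  proof -
    let ?x = "fourier_vec n m"
    have R_act: "cmat R *\<^sub>v (of_real c \<cdot>\<^sub>v ?x) = of_real (p\<^sup>2 * c) \<cdot>\<^sub>v ?x" for c
      unfolding R_def by (simp add: cmat_smult_one_mult_vec smult_smult_assoc)
    have K_act: "cmat K *\<^sub>v y = cmat R *\<^sub>v ((cmat (sys_B n))\<^sup>T *\<^sub>v (cmat P *\<^sub>v y))"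
      if "y \<in> carrier_vec (n + n)" for y
      unfolding K using R P that
      by (simp only: cmat_mult3_mult_vec[of _ n n _ "n + n" _ "n + n"] map_mat_transpose[symmetric]
          sys_B_carrier transpose_carrier_mat)
    have l: "2 * cos (2 * pi * real m / real n) - 2 \<le> 0" by simp
    note P_modes = LQR_riccati_on_mode[OF p q fourier_vec_carrier fourier_vec_nonzero[OF n]
        D2_fourier_eigen[OF n] l P riccati_stable[unfolded R_def]]
    show ?thesis
      by (simp only: K_act[OF block_vec_carrier[OF fourier_vec_carrier]] P_modes
          sys_B_transpose_mult_block_vec[OF fourier_vec_carrier] R_act)
        (simp add: power2_eq_square)
  qed
  then show "mat n n (\<lambda>(i, j). K $$ (i, j)) = p \<cdot>\<^sub>m 1\<^sub>m n"
    "mat n n (\<lambda>(i, j). K $$ (i, j + n)) = sqrt (2 * p + p\<^sup>2 * q) \<cdot>\<^sub>m 1\<^sub>m n"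
    using gain_blocks_eq_smult_one[OF n K_carrier] by auto
qed

lemma Kalman_gain_blocks:
  fixes p :: real and L :: "real mat"
  assumes n: "n > 0" and p: "p > 0"
    and opt: "optimal_Kalman_gain (2 * n) (sys_A n) (sys_B n) (sys_C n p) (1\<^sub>m n - (2 / p) \<cdot>\<^sub>m D2 n) L"
  shows "mat n n (\<lambda>(i, j). L $$ (i, j)) = (sqrt (2 * p) / p) \<cdot>\<^sub>m 1\<^sub>m n"
    "mat n n (\<lambda>(i, j). L $$ (i + n, j)) = 1\<^sub>m n"
proof -
  define W where "W = 1\<^sub>m n - (2 / p) \<cdot>\<^sub>m D2 n"
  have W: "W \<in> carrier_mat n n" unfolding W_def by (simp add: minus_carrier_mat)
  have W_sym: "W\<^sup>T = W" unfolding W_def by (rule one_minus_D2_symmetric)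
  have Q: "sys_B n * (sys_B n)\<^sup>T \<in> carrier_mat (n + n) (n + n)"
    by (metis mult_carrier_mat sys_B_carrier transpose_carrier_mat)
  obtain S where S: "S \<in> carrier_mat (n + n) (n + n)" and L: "L\<^sup>T = W * sys_C n p * S"
    and riccati_stable: "cmat S * cmat (sys_A n)\<^sup>T + (cmat (sys_A n)\<^sup>T)\<^sup>T * cmat S
        - cmat S * cmat ((sys_C n p)\<^sup>T * W * sys_C n p) * cmat S + cmat (sys_B n * (sys_B n)\<^sup>T)
        = 0\<^sub>m (n + n) (n + n)"
      "\<forall>z. eigenvalue ((cmat (sys_A n)\<^sup>T)\<^sup>T - cmat S * cmat ((sys_C n p)\<^sup>T * W * sys_C n p)) z \<longrightarrow> Re z < 0"
    using optimal_LQR_gain_complex_riccati[OF optimal_Kalman_gain_dual[OF opt[unfolded mult_2, folded W_def]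
        sys_A_carrier sys_B_carrier sys_C_carrier W W_sym] _ _ Q W W_sym]
    unfolding transpose_transpose by auto
  have Lt: "L\<^sup>T \<in> carrier_mat n (n + n)"
    unfolding L using W S by (metis mult_carrier_mat sys_C_carrier)
  have "cmat L\<^sup>T *\<^sub>v block_vec 1 0 (fourier_vec n m) = of_real (sqrt (2 * p) / p) \<cdot>\<^sub>v fourier_vec n m
      \<and> cmat L\<^sup>T *\<^sub>v block_vec 0 1 (fourier_vec n m) = of_real 1 \<cdot>\<^sub>v fourier_vec n m"
    if "m < n" for m
  proof -
    let ?x = "fourier_vec n m" and ?l = "2 * cos (2 * pi * real m / real n) - 2"
    have "cmat W *\<^sub>v ?x = of_real (1 - 2 / p * ?l) \<cdot>\<^sub>v ?x"
      unfolding W_def by (rule one_minus_D2_mult_eigenvector[OF fourier_vec_carrier D2_fourier_eigen[OF n]])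
    then have W_act: "cmat W *\<^sub>v (of_real c \<cdot>\<^sub>v ?x) = of_real ((1 - 2 / p * ?l) * c) \<cdot>\<^sub>v ?x" for c
      using W by (simp add: mult_mat_vec[of _ n n] smult_smult_assoc mult.commute)
    have L_act: "cmat L\<^sup>T *\<^sub>v y = cmat W *\<^sub>v (cmat (sys_C n p) *\<^sub>v (cmat S *\<^sub>v y))"
      if "y \<in> carrier_vec (n + n)" for y
      unfolding L using W S that by (rule cmat_mult3_mult_vec[OF _ sys_C_carrier])
    have l: "?l \<le> 0" by simp
    then have "2 / p * ?l \<le> 0" by (rule mult_nonneg_nonpos[rotated]) (use p in simp)
    then have w: "1 - 2 / p * ?l > 0" by linarith
    note S_modes = Kalman_riccati_on_mode[OF p fourier_vec_carrier fourier_vec_nonzero[OF n]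
        D2_fourier_eigen[OF n] l S riccati_stable[unfolded W_def]]
    show ?thesis
      by (simp only: L_act[OF block_vec_carrier[OF fourier_vec_carrier]] S_modes
          sys_C_mult_block_vec[OF fourier_vec_carrier] W_act)
        (use p w in \<open>simp add: power2_eq_square\<close>)
  qed
  then have "mat n n (\<lambda>(i, j). L\<^sup>T $$ (i, j)) = (sqrt (2 * p) / p) \<cdot>\<^sub>m 1\<^sub>m n"
    "mat n n (\<lambda>(i, j). L\<^sup>T $$ (i, j + n)) = 1 \<cdot>\<^sub>m 1\<^sub>m n"
    using gain_blocks_eq_smult_one[OF n Lt, of "sqrt (2 * p) / p" 1] by auto
  moreover have "L \<in> carrier_mat (n + n) n"
    using Lt by (metis transpose_carrier_mat transpose_transpose)
  ultimately show "mat n n (\<lambda>(i, j). L $$ (i, j)) = (sqrt (2 * p) / p) \<cdot>\<^sub>m 1\<^sub>m n"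
    "mat n n (\<lambda>(i, j). L $$ (i + n, j)) = 1\<^sub>m n"
    by (auto simp: mat_eq_iff)
qed

theorem mainTheorem4:
  fixes n :: nat and c \<Delta>x \<alpha> q1 q2 r \<sigma>m \<sigma>d :: real
    and K L :: "real mat"
  assumes n2: "n \<ge> 2"
    and pos: "c > 0" "\<Delta>x > 0" "\<alpha> > 0" "q1 > 0" "q2 > 0" "r > 0" "\<sigma>m > 0" "\<sigma>d > 0"
    and K_opt: "optimal_LQR_gain (2 * n) (sys_A n) (sys_B n)
          (four_block_mat (1\<^sub>m n - (\<alpha>\<^sup>2 / \<Delta>x\<^sup>2) \<cdot>\<^sub>m D2 n) (0\<^sub>m n n)
                          (0\<^sub>m n n) ((c\<^sup>2 * q1\<^sup>2 / (q2\<^sup>2 * \<Delta>x\<^sup>2)) \<cdot>\<^sub>m 1\<^sub>m n))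
          (((\<Delta>x\<^sup>2 * r / (c\<^sup>2 * q1))\<^sup>2) \<cdot>\<^sub>m 1\<^sub>m n) K"
    and L_opt: "optimal_Kalman_gain (2 * n) (sys_A n) (sys_B n)
          (sys_C n (\<Delta>x\<^sup>2 * \<sigma>d / (c\<^sup>2 * \<sigma>m)))
          (1\<^sub>m n - (\<alpha>\<^sup>2 / \<Delta>x\<^sup>2) \<cdot>\<^sub>m D2 n) L"
    and h1: "q1 = \<sigma>m"
    and h2: "r = \<sigma>d"
    and h3: "\<alpha>\<^sup>2 / \<Delta>x\<^sup>2 = 2 / (\<Delta>x\<^sup>2 * \<sigma>d / (c\<^sup>2 * \<sigma>m))"
  shows "diagonal_mat (mat n n (\<lambda>(i,j). K $$ (i, j)))
       \<and> diagonal_mat (mat n n (\<lambda>(i,j). K $$ (i, j + n)))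
       \<and> diagonal_mat (mat n n (\<lambda>(i,j). L $$ (i, j)))
       \<and> diagonal_mat (mat n n (\<lambda>(i,j). L $$ (i + n, j)))"
proof -
  define \<Pi>4 where "\<Pi>4 = \<Delta>x\<^sup>2 * \<sigma>d / (c\<^sup>2 * \<sigma>m)"
  have n: "n > 0" using n2 by simp
  have \<Pi>4: "\<Pi>4 > 0" unfolding \<Pi>4_def using pos by simp
  have \<Pi>2: "c\<^sup>2 * q1\<^sup>2 / (q2\<^sup>2 * \<Delta>x\<^sup>2) > 0" using pos by simp
  have \<Pi>1: "\<alpha>\<^sup>2 / \<Delta>x\<^sup>2 = 2 / \<Pi>4" unfolding \<Pi>4_def by (rule h3)
  have \<Pi>3: "\<Delta>x\<^sup>2 * r / (c\<^sup>2 * q1) = \<Pi>4" unfolding \<Pi>4_def h1 h2 ..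
  note K_blocks = LQR_gain_blocks[OF n \<Pi>4 \<Pi>2 K_opt[unfolded \<Pi>1 \<Pi>3]]
  note L_blocks = Kalman_gain_blocks[OF n \<Pi>4 L_opt[folded \<Pi>4_def, unfolded \<Pi>1]]
  show ?thesis
    unfolding K_blocks L_blocks diagonal_mat_def by simp
qed

end
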